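(* Let $K, L \subset \mathbb{R}^m$ be proper cones. Suppose that $K$ is an $L$-isotone projection set, and that at least one of the sets $\operatorname{int}(K^* )\cap L$ or $\operatorname{int}(K^* )\cap L^*$ is nonempty. Then $K$ is subdual and $K\subset L\subset K^*$.
   Context: $\mathbb{R}^m$ carries the standard inner product $\langle\cdot,\cdot\rangle$ and Euclidean norm. A convex cone $K$ is a nonempty set with $K+K\subset K$ and $tK\subset K$ for all $t\ge 0$; it is pointed if $K\cap(-K)=\{0\}$, generating if $K-K=\mathbb{R}^m$; a proper cone is a generating, closed, convex, pointed cone. The dual of $K$ is $K^*=\{y:\langle x,y\rangle\ge 0\ \forall x\in K\}$. $K$ is subdual if $K\subset K^*$. For a cone $L$, $x\le_L y$ means $y-x\in L$. For a nonempty closed convex set $D$, $P_D$ denotes the metric (nearest-point) projection onto $D$. $D$ is called an $L$-isotone projection set ($L$-isotone) if $x\le_L y$ implies $P_Dx\le_L P_Dy$ for all $x,y\in\mathbb{R}^m$. *)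

theory Defs
  imports "HOL-Analysis.Analysis"
begin

definition is_convex_cone :: "'a::euclidean_space set \<Rightarrow> bool" where
  "is_convex_cone K \<longleftrightarrow> K \<noteq> {} \<and> (\<forall>x\<in>K. \<forall>y\<in>K. x + y \<in> K) \<and> (\<forall>t::real. \<forall>x\<in>K. t \<ge> 0 \<longrightarrow> t *\<^sub>R x \<in> K)"

definition pointed_cone :: "'a::euclidean_space set \<Rightarrow> bool" where
  "pointed_cone K \<longleftrightarrow> K \<inter> uminus ` K = {0}"

definition generating_cone :: "'a::euclidean_space set \<Rightarrow> bool" where
  "generating_cone K \<longleftrightarrow> {x - y | x y. x \<in> K \<and> y \<in> K} = UNIV"

definition proper_cone :: "'a::euclidean_space set \<Rightarrow> bool" where
  "proper_cone K \<longleftrightarrow> is_convex_cone K \<and> generating_cone K \<and> closed K \<and> pointed_cone K"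

definition dual_cone :: "'a::euclidean_space set \<Rightarrow> 'a set" where
  "dual_cone K = {y. \<forall>x\<in>K. inner x y \<ge> 0}"

definition subdual :: "'a::euclidean_space set \<Rightarrow> bool" where
  "subdual K \<longleftrightarrow> K \<subseteq> dual_cone K"

definition cone_le :: "'a::euclidean_space set \<Rightarrow> 'a \<Rightarrow> 'a \<Rightarrow> bool" where
  "cone_le L x y \<longleftrightarrow> y - x \<in> L"

(* metric projection P_D = closest_point D (D nonempty closed convex) *)
definition isotone_projection_set :: "'a::euclidean_space set \<Rightarrow> 'a set \<Rightarrow> bool" where
  "isotone_projection_set L D \<longleftrightarrow>
     (\<forall>x y. cone_le L x y \<longrightarrow> cone_le L (closest_point D x) (closest_point D y))"

end

theory Submission
  imports Defs
begin

text \<open>Let \<open>P\<close> be the metric projection onto \<open>K\<close>; then \<open>P z = 0\<close> iff \<open>-z \<in> K\<^sup>*\<close>. For \<open>x \<in> K\<close>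
  and \<open>v \<in> L\<close> with \<open>v - x \<in> K\<^sup>*\<close>, isotonicity applied to \<open>x - v \<le>\<^sub>L x\<close> gives
  \<open>0 = P (x - v) \<le>\<^sub>L P x = x\<close>, so \<open>x \<in> L\<close>; applied to \<open>-y \<le>\<^sub>L 0\<close> it shows
  \<open>-P (-y) \<in> K \<inter> -L\<close>, so \<open>L \<subseteq> K\<^sup>*\<close> as soon as \<open>K \<inter> -L = {0}\<close>. An interior point \<open>u\<close> of \<open>K\<^sup>*\<close>
  satisfies \<open>\<langle>k, u\<rangle> \<ge> c \<parallel>k\<parallel>\<close> on \<open>K\<close>. If \<open>u \<in> L\<close>, take \<open>v = s u\<close> with \<open>s\<close> large to get \<open>K \<subseteq> L\<close>,
  and pointedness of \<open>L\<close> gives \<open>K \<inter> -L = {0}\<close>. If \<open>u \<in> L\<^sup>*\<close>, the bound gives \<open>K \<inter> -L = {0}\<close>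
  directly, and writing \<open>x = a - b\<close> with \<open>a, b \<in> L \<subseteq> K\<^sup>*\<close> we may take \<open>v = a\<close>.\<close>

lemma is_convex_cone_zero: "is_convex_cone K \<Longrightarrow> 0 \<in> K"
  unfolding is_convex_cone_def by (metis all_not_in_conv order_refl scaleR_zero_left)

lemma is_convex_cone_convex: "is_convex_cone K \<Longrightarrow> convex K"
  unfolding convex_def is_convex_cone_def by blast

lemma is_convex_cone_scaleR: "is_convex_cone K \<Longrightarrow> x \<in> K \<Longrightarrow> 0 \<le> t \<Longrightarrow> t *\<^sub>R x \<in> K"
  unfolding is_convex_cone_def by blast

lemma pointed_coneD: "pointed_cone L \<Longrightarrow> w \<in> L \<Longrightarrow> - w \<in> L \<Longrightarrow> w = 0"
  unfolding pointed_cone_def by (metis IntI image_eqI minus_minus singletonD)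

lemma closest_point_cone_eq_0_iff:
  assumes cone: "is_convex_cone K" and "closed K"
  shows "closest_point K z = 0 \<longleftrightarrow> - z \<in> dual_cone K"
proof
  assume "closest_point K z = 0"
  then have "inner z k \<le> 0" if "k \<in> K" for k
    using closest_point_dot[OF is_convex_cone_convex[OF cone] \<open>closed K\<close> that, of z] by simp
  then show "- z \<in> dual_cone K"
    unfolding dual_cone_def by (simp add: inner_commute)
next
  assume dual: "- z \<in> dual_cone K"
  have "dist z 0 \<le> dist z k" if "k \<in> K" for k
  proof -
    have "inner z k \<le> 0"
      using dual that unfolding dual_cone_def by (auto simp: inner_commute)
    moreover have "(dist z k)\<^sup>2 = (norm z)\<^sup>2 - 2 * inner z k + (norm k)\<^sup>2"
      by (simp add: dist_norm power2_norm_eq_inner inner_diff_left inner_diff_right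
          inner_commute)
    ultimately have "(norm z)\<^sup>2 \<le> (dist z k)\<^sup>2"
      using zero_le_power2[of "norm k"] by linarith
    then show ?thesis
      by (metis dist_0_norm dist_commute power2_le_imp_le zero_le_dist)
  qed
  then show "closest_point K z = 0"
    using closest_point_unique[OF is_convex_cone_convex[OF cone] \<open>closed K\<close>
        is_convex_cone_zero[OF cone]] by simp
qed

lemma interior_dual_cone_inner_ge:
  assumes "u \<in> interior (dual_cone K)"
  obtains c where "c > 0" "\<And>k. k \<in> K \<Longrightarrow> c * norm k \<le> inner k u"
proof -
  obtain e where e: "e > 0" "ball u e \<subseteq> dual_cone K"
    using assms mem_interior by blast
  have "e / 2 * norm k \<le> inner k u" if k: "k \<in> K" for k
  proof (cases "k = 0")
    case False
    define v where "v = u - (e / 2 / norm k) *\<^sub>R k"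
    have "dist u v < e"
      using False e(1) by (simp add: v_def dist_norm)
    then have "0 \<le> inner k v"
      using e(2) k unfolding dual_cone_def by auto
    also have "inner k v = inner k u - e / 2 * norm k"
      using False by (simp add: v_def inner_diff_right power2_norm_eq_inner[symmetric]
          power2_eq_square)
    finally show ?thesis by simp
  qed simp
  then show thesis
    using e(1) that[of "e / 2"] by simp
qed

lemma interior_dual_cone_absorbs:
  assumes "u \<in> interior (dual_cone K)"
  obtains s :: real where "s \<ge> 0" "s *\<^sub>R u - x \<in> dual_cone K"
proof -
  obtain c where c: "c > 0" "\<And>k. k \<in> K \<Longrightarrow> c * norm k \<le> inner k u"
    using interior_dual_cone_inner_ge[OF assms] by blast
  define s where "s = norm x / c"
  have "s \<ge> 0"
    using c(1) by (simp add: s_def)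
  have "inner k (s *\<^sub>R u - x) \<ge> 0" if "k \<in> K" for k
  proof -
    have "inner k x \<le> norm x * norm k"
      by (metis inner_commute mult.commute norm_cauchy_schwarz)
    also have "\<dots> = s * (c * norm k)"
      using c(1) by (simp add: s_def)
    also have "\<dots> \<le> s * inner k u"
      using c(2)[OF that] \<open>s \<ge> 0\<close> by (rule mult_left_mono)
    finally show ?thesis
      by (simp add: inner_diff_right)
  qed
  then show thesis
    using that[of s] \<open>s \<ge> 0\<close> unfolding dual_cone_def by simp
qed

lemma interior_dual_cone_inner_le_0:
  assumes "u \<in> interior (dual_cone K)" "w \<in> K" "inner w u \<le> 0"
  shows "w = 0"
proof -
  obtain c where "c > 0" "c * norm w \<le> inner w u"
    using interior_dual_cone_inner_ge[OF assms(1)] assms(2) by metis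
  then show ?thesis
    using assms(3) by (smt (verit) mult_pos_pos zero_less_norm_iff)
qed

context
  fixes K L :: "'a::euclidean_space set"
  assumes K_cone: "is_convex_cone K" and K_closed: "closed K"
    and isotone: "isotone_projection_set L K"
begin

lemma isotone_projection_mono: "y - x \<in> L \<Longrightarrow> closest_point K y - closest_point K x \<in> L"
  using isotone unfolding isotone_projection_set_def cone_le_def by blast

lemma isotone_projection_mem:
  assumes "x \<in> K" "v \<in> L" "v - x \<in> dual_cone K"
  shows "x \<in> L"
proof -
  have "closest_point K (x - v) = 0"
    using assms(3) closest_point_cone_eq_0_iff[OF K_cone K_closed] by simp
  moreover have "closest_point K x - closest_point K (x - v) \<in> L"
    by (rule isotone_projection_mono) (simp add: assms(2))
  ultimately show ?thesis
    using closest_point_self[OF assms(1)] by simp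
qed

lemma isotone_projection_dual:
  assumes pointed: "\<And>w. w \<in> K \<Longrightarrow> - w \<in> L \<Longrightarrow> w = 0"
  shows "L \<subseteq> dual_cone K"
proof
  fix y assume "y \<in> L"
  have "closest_point K 0 - closest_point K (- y) \<in> L"
    by (rule isotone_projection_mono) (simp add: \<open>y \<in> L\<close>)
  then have "- closest_point K (- y) \<in> L"
    using closest_point_self[OF is_convex_cone_zero[OF K_cone]] by simp
  moreover have "closest_point K (- y) \<in> K"
    using closest_point_in_set[OF K_closed] is_convex_cone_zero[OF K_cone] by blast
  ultimately have "closest_point K (- y) = 0"
    using pointed by blast
  then show "y \<in> dual_cone K"
    using closest_point_cone_eq_0_iff[OF K_cone K_closed] by simp
qed

lemma isotone_projection_subset:
  assumes "generating_cone L" "L \<subseteq> dual_cone K"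
  shows "K \<subseteq> L"
proof
  fix x assume "x \<in> K"
  obtain a b where "x = a - b" "a \<in> L" "b \<in> L"
    using assms(1) unfolding generating_cone_def by blast
  then show "x \<in> L"
    using isotone_projection_mem[OF \<open>x \<in> K\<close>, of a] assms(2) by auto
qed

end

theorem theorem4:
  fixes K L :: "'a::euclidean_space set"
  assumes "proper_cone K" and "proper_cone L"
    and "isotone_projection_set L K"
    and "interior (dual_cone K) \<inter> L \<noteq> {} \<or> interior (dual_cone K) \<inter> dual_cone L \<noteq> {}"
  shows "subdual K \<and> K \<subseteq> L \<and> L \<subseteq> dual_cone K"
proof -
  have K: "is_convex_cone K" "closed K"
    and L: "is_convex_cone L" "generating_cone L" "pointed_cone L"
    using assms(1,2) unfolding proper_cone_def by auto
  note iso = isotone_projection_mem[OF K assms(3)] isotone_projection_dual[OF K assms(3)]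
    isotone_projection_subset[OF K assms(3)]
  have "K \<subseteq> L \<and> L \<subseteq> dual_cone K"
    using assms(4)
  proof
    assume "interior (dual_cone K) \<inter> L \<noteq> {}"
    then obtain u where u: "u \<in> interior (dual_cone K)" "u \<in> L" by blast
    have "x \<in> L" if "x \<in> K" for x
      using interior_dual_cone_absorbs[OF u(1), of x] iso(1)[OF that]
        is_convex_cone_scaleR[OF L(1) u(2)] by metis
    then show ?thesis
      using iso(2) pointed_coneD[OF L(3)] by blast
  next
    assume "interior (dual_cone K) \<inter> dual_cone L \<noteq> {}"
    then obtain u where u: "u \<in> interior (dual_cone K)" "u \<in> dual_cone L" by blast
    have "w = 0" if "w \<in> K" "- w \<in> L" for w
      using interior_dual_cone_inner_le_0[OF u(1) that(1)] u(2) that(2)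
      unfolding dual_cone_def by fastforce
    then show ?thesis
      using iso(2,3) L(2) by blast
  qed
  then show ?thesis
    unfolding subdual_def by blast
qed

end
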